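(* Let $q$ be a power of a prime $p$ and let $X\subset\mathbb{P}^n$ be a Frobenius nonclassical hypersurface over $\mathbb{F}_q$ of degree $d\not\equiv 0\pmod p$. Then $X$ meets every line $L\subset\mathbb{P}^n$ defined over $\mathbb{F}_q$ in at least one $\mathbb{F}_q$-point.
   Context: A hypersurface $X=\{F=0\}$ over $\mathbb{F}_q$ is Frobenius nonclassical if $F$ divides $\sum_{i=0}^n x_i^q\frac{\partial F}{\partial x_i}$. *)

theory Defs
  imports Main "HOL-Library.Poly_Mapping"
begin

text \<open>Multivariate polynomials over 'k in variables x_i (i :: nat), as finitely
supported maps from exponent vectors exponent vectors to coefficients.
The poly_mapping library provides the ring structure (convolution product).\<close>

type_synonym 'k mpoly = "(nat \<Rightarrow>\<^sub>0 nat) \<Rightarrow>\<^sub>0 'k"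

definition mvar :: "nat \<Rightarrow> 'k::comm_ring_1 mpoly" where
  "mvar i = Poly_Mapping.single (Poly_Mapping.single i 1) 1"

definition mdeg :: "(nat \<Rightarrow>\<^sub>0 nat) \<Rightarrow> nat" where
  "mdeg m = (\<Sum>i\<in>Poly_Mapping.keys m. Poly_Mapping.lookup m i)"

definition in_vars :: "nat \<Rightarrow> 'k::zero mpoly \<Rightarrow> bool" where
  "in_vars n F \<longleftrightarrow> (\<forall>m\<in>Poly_Mapping.keys F. Poly_Mapping.keys m \<subseteq> {..n})"

definition homogeneous :: "nat \<Rightarrow> 'k::zero mpoly \<Rightarrow> bool" where
  "homogeneous d F \<longleftrightarrow> (\<forall>m\<in>Poly_Mapping.keys F. mdeg m = d)"

definition meval :: "'k::comm_ring_1 mpoly \<Rightarrow> (nat \<Rightarrow> 'k) \<Rightarrow> 'k" where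
  "meval F x = (\<Sum>m\<in>Poly_Mapping.keys F.
      Poly_Mapping.lookup F m * (\<Prod>i\<in>Poly_Mapping.keys m. x i ^ Poly_Mapping.lookup m i))"

definition mpderiv :: "nat \<Rightarrow> 'k::comm_ring_1 mpoly \<Rightarrow> 'k mpoly" where
  "mpderiv i F = (\<Sum>m\<in>Poly_Mapping.keys F.
      Poly_Mapping.single (m - Poly_Mapping.single i 1)
        (of_nat (Poly_Mapping.lookup m i) * Poly_Mapping.lookup F m))"

text \<open>Frobenius nonclassical (over F_q, q = |'k|): F divides sum_i x_i^q dF/dx_i.\<close>
definition frobenius_nonclassical :: "nat \<Rightarrow> 'k::{finite,comm_ring_1} mpoly \<Rightarrow> bool" where
  "frobenius_nonclassical n F \<longleftrightarrow>
     F dvd (\<Sum>i\<le>n. mvar i ^ card (UNIV :: 'k set) * mpderiv i F)"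

end

theory Submission
  imports Defs "HOL-Computational_Algebra.Polynomial_Factorial"
begin

(*
  Restrict F to the line: f(t) = F(u + t v), and let A(t), B(t) be the derivatives of F in the
  directions u and v, evaluated at u + t v. Euler's identity gives A + t B = d f, while Frobenius
  nonclassicality together with (u_i + t v_i)^q = u_i + t^q v_i gives f | A + t^q B; hence
  f | (t^q - t) B. If L had no F_q-point, then F(v) ~= 0, so f has degree d, and f has no root
  in F_q, so it is coprime to t^q - t = prod_c (t - c) and divides B. But comparing coefficients
  of t^d in Euler's identity shows that B has degree at most d - 1 and coefficient d F(v) ~= 0
  at t^(d-1).
*)

definition monom_eval :: "(nat \<Rightarrow>\<^sub>0 nat) \<Rightarrow> (nat \<Rightarrow> 'a::comm_monoid_mult) \<Rightarrow> 'a" where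
  "monom_eval m x = (\<Prod>i\<in>Poly_Mapping.keys m. x i ^ Poly_Mapping.lookup m i)"

lemma monom_eval_superset:
  assumes "finite S" "Poly_Mapping.keys m \<subseteq> S"
  shows "monom_eval m x = (\<Prod>i\<in>S. x i ^ Poly_Mapping.lookup m i)"
  unfolding monom_eval_def
  by (rule prod.mono_neutral_left) (use assms in \<open>auto simp: in_keys_iff\<close>)

lemma monom_eval_zero [simp]: "monom_eval 0 x = 1"
  by (simp add: monom_eval_def)

lemma monom_eval_single [simp]: "monom_eval (Poly_Mapping.single i k) x = x i ^ k"
  by (simp add: monom_eval_def)

lemma monom_eval_add: "monom_eval (m + m') x = monom_eval m x * monom_eval m' x"
proof -
  let ?S = "Poly_Mapping.keys m \<union> Poly_Mapping.keys m'"
  have "monom_eval (m + m') x = (\<Prod>i\<in>?S. x i ^ Poly_Mapping.lookup (m + m') i)"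
    using keys_add[of m m'] by (intro monom_eval_superset) auto
  also have "\<dots> = monom_eval m x * monom_eval m' x"
    by (simp add: lookup_add power_add prod.distrib monom_eval_superset[of ?S])
  finally show ?thesis .
qed

lemma mdeg_superset:
  assumes "finite S" "Poly_Mapping.keys m \<subseteq> S"
  shows "mdeg m = (\<Sum>i\<in>S. Poly_Mapping.lookup m i)"
  unfolding mdeg_def
  by (rule sum.mono_neutral_left) (use assms in \<open>auto simp: in_keys_iff\<close>)

lemma mdeg_single [simp]: "mdeg (Poly_Mapping.single i k) = k"
  by (simp add: mdeg_def)

lemma mdeg_add: "mdeg (m + m') = mdeg m + mdeg m'"
proof -
  let ?S = "Poly_Mapping.keys m \<union> Poly_Mapping.keys m'"
  have "mdeg (m + m') = (\<Sum>i\<in>?S. Poly_Mapping.lookup (m + m') i)"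
    using keys_add[of m m'] by (intro mdeg_superset) auto
  also have "\<dots> = mdeg m + mdeg m'"
    by (simp add: lookup_add sum.distrib mdeg_superset[of ?S])
  finally show ?thesis .
qed

lemma minus_single_add_single:
  assumes "Poly_Mapping.lookup m i > 0"
  shows "m - Poly_Mapping.single i 1 + Poly_Mapping.single i (1::nat) = m"
  using assms by (intro poly_mapping_eqI) (auto simp: lookup_add lookup_minus lookup_single when_def)

lemma poly_mapping_sum_single:
  "F = (\<Sum>m\<in>Poly_Mapping.keys F. Poly_Mapping.single m (Poly_Mapping.lookup F m))"
  by (intro poly_mapping_eqI) (simp add: lookup_sum lookup_single when_def in_keys_iff)

locale coeff_ring_hom =
  fixes \<phi> :: "'a::comm_ring_1 \<Rightarrow> 'b::comm_ring_1"
  assumes map_add: "\<phi> (a + b) = \<phi> a + \<phi> b"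
    and map_mult: "\<phi> (a * b) = \<phi> a * \<phi> b"
    and map_one: "\<phi> 1 = 1"
begin

lemma map_zero [simp]: "\<phi> 0 = 0"
  using map_add[of 0 0] by simp

lemma map_of_nat [simp]: "\<phi> (of_nat k) = of_nat k"
  by (induction k) (simp_all add: map_add map_one)

definition eval :: "'a mpoly \<Rightarrow> (nat \<Rightarrow> 'b) \<Rightarrow> 'b" where
  "eval F x = (\<Sum>m\<in>Poly_Mapping.keys F. \<phi> (Poly_Mapping.lookup F m) * monom_eval m x)"

lemma eval_superset:
  assumes "finite S" "Poly_Mapping.keys F \<subseteq> S"
  shows "eval F x = (\<Sum>m\<in>S. \<phi> (Poly_Mapping.lookup F m) * monom_eval m x)"
  unfolding eval_def
  by (rule sum.mono_neutral_left) (use assms in \<open>auto simp: in_keys_iff\<close>)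

lemma eval_zero [simp]: "eval 0 x = 0"
  by (simp add: eval_def)

lemma eval_single [simp]: "eval (Poly_Mapping.single m c) x = \<phi> c * monom_eval m x"
  by (simp add: eval_def)

lemma eval_one [simp]: "eval 1 x = 1"
  by (simp add: eval_def map_one)

lemma eval_mvar [simp]: "eval (mvar i) x = x i"
  by (simp add: mvar_def map_one)

lemma eval_add: "eval (F + G) x = eval F x + eval G x"
proof -
  let ?S = "Poly_Mapping.keys F \<union> Poly_Mapping.keys G"
  have "eval (F + G) x = (\<Sum>m\<in>?S. \<phi> (Poly_Mapping.lookup (F + G) m) * monom_eval m x)"
    using keys_add[of F G] by (intro eval_superset) auto
  also have "\<dots> = eval F x + eval G x"
    by (simp add: lookup_add map_add distrib_right sum.distrib eval_superset[of ?S])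
  finally show ?thesis .
qed

lemma eval_sum: "eval (\<Sum>j\<in>A. G j) x = (\<Sum>j\<in>A. eval (G j) x)"
  by (induction A rule: infinite_finite_induct) (auto simp: eval_add)

lemma eval_mult: "eval (F * G) x = eval F x * eval G x"
proof -
  let ?F = "\<lambda>m. Poly_Mapping.single m (Poly_Mapping.lookup F m)"
  let ?G = "\<lambda>m. Poly_Mapping.single m (Poly_Mapping.lookup G m)"
  have "F * G = (\<Sum>m\<in>Poly_Mapping.keys F. \<Sum>m'\<in>Poly_Mapping.keys G. ?F m * ?G m')"
    by (subst (1 2) poly_mapping_sum_single) (simp only: sum_product)
  then have "eval (F * G) x = (\<Sum>m\<in>Poly_Mapping.keys F. \<Sum>m'\<in>Poly_Mapping.keys G. eval (?F m * ?G m') x)"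
    by (simp only: eval_sum)
  also have "\<dots> = (\<Sum>m\<in>Poly_Mapping.keys F. \<Sum>m'\<in>Poly_Mapping.keys G.
      (\<phi> (Poly_Mapping.lookup F m) * monom_eval m x) * (\<phi> (Poly_Mapping.lookup G m') * monom_eval m' x))"
    by (simp add: mult_single map_mult monom_eval_add mult_ac)
  also have "\<dots> = eval F x * eval G x"
    by (simp add: eval_def sum_product)
  finally show ?thesis .
qed

lemma eval_power: "eval (F ^ k) x = eval F x ^ k"
  by (induction k) (simp_all add: eval_mult)

end

lemma monom_eval_minus_single:
  "x i * (of_nat (Poly_Mapping.lookup m i) * monom_eval (m - Poly_Mapping.single i 1) x)
     = of_nat (Poly_Mapping.lookup m i) * monom_eval m x"
proof (cases "Poly_Mapping.lookup m i = 0")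
  case False
  then have "monom_eval m x = monom_eval (m - Poly_Mapping.single i 1) x * x i"
    by (metis gr0I minus_single_add_single monom_eval_add monom_eval_single power_one_right)
  then show ?thesis by (simp add: mult_ac)
qed simp

lemma keys_mpderiv:
  "Poly_Mapping.keys (mpderiv i F) \<subseteq>
     (\<lambda>m. m - Poly_Mapping.single i 1) ` {m \<in> Poly_Mapping.keys F. Poly_Mapping.lookup m i > 0}"
  unfolding mpderiv_def
  by (rule order.trans[OF keys_sum]) (force split: if_splits intro: gr0I)

lemma homogeneous_mpderiv:
  assumes "homogeneous d F"
  shows "homogeneous (d - 1) (mpderiv i F)"
  unfolding homogeneous_def
proof
  fix m' assume "m' \<in> Poly_Mapping.keys (mpderiv i F)"
  then obtain m where m: "m \<in> Poly_Mapping.keys F" "Poly_Mapping.lookup m i > 0"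
    and m': "m' = m - Poly_Mapping.single i 1"
    using keys_mpderiv by blast
  have "mdeg m = mdeg m' + 1"
    using minus_single_add_single[OF m(2)] m' mdeg_add by (metis mdeg_single)
  with assms m(1) show "mdeg m' = d - 1"
    by (simp add: homogeneous_def)
qed

context coeff_ring_hom
begin

lemma eval_mpderiv:
  "eval (mpderiv i F) x = (\<Sum>m\<in>Poly_Mapping.keys F.
     \<phi> (Poly_Mapping.lookup F m) * (of_nat (Poly_Mapping.lookup m i) * monom_eval (m - Poly_Mapping.single i 1) x))"
  by (simp add: mpderiv_def eval_sum map_mult mult_ac)

lemma euler_identity:
  assumes "in_vars n F" "homogeneous d F"
  shows "(\<Sum>i\<le>n. x i * eval (mpderiv i F) x) = of_nat d * eval F x"
proof -
  have "(\<Sum>i\<le>n. x i * eval (mpderiv i F) x) = (\<Sum>i\<le>n. \<Sum>m\<in>Poly_Mapping.keys F.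
      \<phi> (Poly_Mapping.lookup F m) * (x i * (of_nat (Poly_Mapping.lookup m i) * monom_eval (m - Poly_Mapping.single i 1) x)))"
    by (simp only: eval_mpderiv sum_distrib_left mult.left_commute[of "x _"])
  also have "\<dots> = (\<Sum>m\<in>Poly_Mapping.keys F. \<Sum>i\<le>n.
      \<phi> (Poly_Mapping.lookup F m) * monom_eval m x * of_nat (Poly_Mapping.lookup m i))"
    by (subst sum.swap) (simp only: monom_eval_minus_single mult_ac)
  also have "\<dots> = (\<Sum>m\<in>Poly_Mapping.keys F.
      \<phi> (Poly_Mapping.lookup F m) * monom_eval m x * (\<Sum>i\<le>n. of_nat (Poly_Mapping.lookup m i)))"
    by (simp only: sum_distrib_left)
  also have "\<dots> = (\<Sum>m\<in>Poly_Mapping.keys F. \<phi> (Poly_Mapping.lookup F m) * monom_eval m x * of_nat d)"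
  proof (intro sum.cong refl)
    fix m assume m: "m \<in> Poly_Mapping.keys F"
    have "d = mdeg m"
      using assms(2) m by (simp add: homogeneous_def)
    also have "\<dots> = (\<Sum>i\<le>n. Poly_Mapping.lookup m i)"
      using assms(1) m by (intro mdeg_superset) (auto simp: in_vars_def)
    finally show "\<phi> (Poly_Mapping.lookup F m) * monom_eval m x * (\<Sum>i\<le>n. of_nat (Poly_Mapping.lookup m i))
        = \<phi> (Poly_Mapping.lookup F m) * monom_eval m x * of_nat d"
      by simp
  qed
  also have "\<dots> = of_nat d * eval F x"
    by (simp add: eval_def sum_distrib_left mult_ac)
  finally show ?thesis .
qed

end

lemma coeff_mult_degree_le_sum:
  fixes p q :: "'a::comm_semiring_1 poly"
  assumes "degree p \<le> a" "degree q \<le> b"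
  shows "coeff (p * q) (a + b) = coeff p a * coeff q b"
proof -
  have "coeff (p * q) (a + b) = coeff p a * coeff q b + (\<Sum>i\<in>{..a + b} - {a}. coeff p i * coeff q (a + b - i))"
    unfolding coeff_mult by (subst sum.remove[of _ a]) auto
  also have "(\<Sum>i\<in>{..a + b} - {a}. coeff p i * coeff q (a + b - i)) = 0"
  proof (rule sum.neutral, rule ballI)
    fix i assume "i \<in> {..a + b} - {a}"
    then have "a < i \<or> b < a + b - i" by auto
    with assms show "coeff p i * coeff q (a + b - i) = 0"
      by (auto simp: coeff_eq_0)
  qed
  finally show ?thesis by simp
qed

lemma coeff_prod_degree_le_sum:
  fixes p :: "'b \<Rightarrow> 'a::comm_semiring_1 poly"
  assumes "\<And>i. i \<in> S \<Longrightarrow> degree (p i) \<le> a i"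
  shows "coeff (\<Prod>i\<in>S. p i) (\<Sum>i\<in>S. a i) = (\<Prod>i\<in>S. coeff (p i) (a i))"
  using assms
proof (induction S rule: infinite_finite_induct)
  case (insert j S)
  have "degree (\<Prod>i\<in>S. p i) \<le> (\<Sum>i\<in>S. a i)"
    using insert by (intro order.trans[OF degree_prod_sum_le] sum_mono) auto
  with insert show ?case
    by (simp add: coeff_mult_degree_le_sum)
qed simp_all

lemma coeff_power_degree_le:
  fixes p :: "'a::comm_semiring_1 poly"
  assumes "degree p \<le> a"
  shows "coeff (p ^ k) (a * k) = coeff p a ^ k"
  using coeff_prod_degree_le_sum[of "{..<k}" "\<lambda>_. p" "\<lambda>_. a"] assms by (simp add: mult.commute)

interpretation const_poly: coeff_ring_hom "\<lambda>c::'a::comm_ring_1. [:c:]"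
  by unfold_locales (simp_all add: one_pCons)

definition line_restriction ::
    "'a::comm_ring_1 mpoly \<Rightarrow> (nat \<Rightarrow> 'a) \<Rightarrow> (nat \<Rightarrow> 'a) \<Rightarrow> 'a poly" where
  "line_restriction F u v = const_poly.eval F (\<lambda>i. [:u i, v i:])"

lemma poly_line_restriction:
  "poly (line_restriction F u v) c = meval F (\<lambda>i. u i + c * v i)"
  by (simp add: line_restriction_def const_poly.eval_def meval_def monom_eval_def poly_sum poly_prod
      mult.commute)

lemma degree_coeff_line_restriction:
  assumes "homogeneous e F"
  shows "degree (line_restriction F u v) \<le> e" and "coeff (line_restriction F u v) e = meval F v"
proof -
  have linear_power: "degree ([:a, b:] ^ k) \<le> k" for a b :: 'a and k
    by (rule order.trans[OF degree_power_le]) (cases "b = 0"; simp)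
  have degree_monom: "degree (monom_eval m (\<lambda>i. [:u i, v i:])) \<le> mdeg m" for m
    unfolding monom_eval_def mdeg_def
    by (intro order.trans[OF degree_prod_sum_le] sum_mono) (auto simp: o_def intro: linear_power)
  have coeff_monom: "coeff (monom_eval m (\<lambda>i. [:u i, v i:])) (mdeg m) = monom_eval m v" for m
    unfolding monom_eval_def mdeg_def
    using coeff_power_degree_le[of "[:u _, v _:]" 1]
    by (subst coeff_prod_degree_le_sum) (auto simp: linear_power)
  have mdeg_keys: "mdeg m = e" if "m \<in> Poly_Mapping.keys F" for m
    using assms that by (simp add: homogeneous_def)
  have restriction_eq: "line_restriction F u v = (\<Sum>m\<in>Poly_Mapping.keys F.
      smult (Poly_Mapping.lookup F m) (monom_eval m (\<lambda>i. [:u i, v i:])))"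
    by (simp add: line_restriction_def const_poly.eval_def)
  show "degree (line_restriction F u v) \<le> e"
    unfolding restriction_eq
  proof (rule degree_sum_le)
    fix m assume "m \<in> Poly_Mapping.keys F"
    then show "degree (smult (Poly_Mapping.lookup F m) (monom_eval m (\<lambda>i. [:u i, v i:]))) \<le> e"
      using degree_monom[of m] mdeg_keys by (metis degree_smult_le order.trans)
  qed simp
  show "coeff (line_restriction F u v) e = meval F v"
    unfolding restriction_eq coeff_sum meval_def monom_eval_def[symmetric]
    by (intro sum.cong) (simp_all flip: mdeg_keys add: coeff_monom)
qed

lemma power_card_UNIV_eq_self:
  fixes x :: "'a::{finite,field}"
  shows "x ^ card (UNIV :: 'a set) = x"
proof -
  let ?U = "UNIV - {0::'a}"
  have card_UNIV: "card (UNIV :: 'a set) = Suc (card ?U)"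
    by (simp add: card_Diff_singleton finite_UNIV_card_ge_0 Suc_diff_1)
  have "x ^ card ?U = 1" if "x \<noteq> 0"
  proof -
    have "bij_betw ((*) x) ?U ?U"
      by (rule bij_betw_byWitness[where f' = "(*) (inverse x)"]) (use that in auto)
    then have "(\<Prod>y\<in>?U. x * y) = \<Prod>?U"
      by (rule prod.reindex_bij_betw)
    then have "x ^ card ?U * \<Prod>?U = 1 * \<Prod>?U"
      by (simp add: prod.distrib)
    moreover have "\<Prod>?U \<noteq> 0"
      by (subst prod_zero_iff) auto
    ultimately show ?thesis
      by (rule mult_right_cancel[THEN iffD1, rotated])
  qed
  then show ?thesis
    unfolding card_UNIV by (cases "x = 0") simp_all
qed

lemma card_UNIV_field_ge_2: "card (UNIV :: 'a::{finite,field} set) \<ge> 2"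
  using card_mono[of "UNIV :: 'a set" "{0, 1}"] by simp

lemma poly_eqI_finite_field:
  fixes p r :: "'a::{finite,field} poly"
  assumes "degree p \<le> card (UNIV :: 'a set)" and "degree r \<le> card (UNIV :: 'a set)"
    and "coeff p (card (UNIV :: 'a set)) = coeff r (card (UNIV :: 'a set))"
    and "\<And>c. poly p c = poly r c"
  shows "p = r"
  using assms by (intro poly_eqI_degree_lead_coeff[where n = "card (UNIV :: 'a set)" and A = UNIV]) auto

lemma linear_poly_power_card:
  fixes a b :: "'a::{finite,field}"
  shows "[:a, b:] ^ card (UNIV :: 'a set) = [:a:] + smult b ([:0, 1:] ^ card (UNIV :: 'a set))"
proof (rule poly_eqI_finite_field)
  let ?q = "card (UNIV :: 'a set)"
  have q: "?q \<ge> 2"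
    by (rule card_UNIV_field_ge_2)
  show "degree ([:a, b:] ^ ?q) \<le> ?q"
    by (rule order.trans[OF degree_power_le]) (cases "b = 0"; simp)
  have "coeff ([:a, b:] ^ ?q) (1 * ?q) = b"
    by (subst coeff_power_degree_le) (simp_all add: power_card_UNIV_eq_self)
  moreover have "coeff [:a:] ?q = 0"
    using q by (simp add: coeff_eq_0)
  ultimately show "coeff ([:a, b:] ^ ?q) ?q = coeff ([:a:] + smult b ([:0, 1:] ^ ?q)) ?q"
    using coeff_linear_power[of "0::'a" ?q] by simp
  show "degree ([:a:] + smult b ([:0, 1:] ^ ?q)) \<le> ?q"
    by (intro degree_add_le) (auto simp: degree_linear_power)
  show "poly ([:a, b:] ^ ?q) c = poly ([:a:] + smult b ([:0, 1:] ^ ?q)) c" for c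
    by (simp add: power_card_UNIV_eq_self mult.commute)
qed

lemma X_power_card_minus_X:
  "[:0, 1:] ^ card (UNIV :: 'a set) - [:0, 1:] = (\<Prod>c\<in>UNIV. [:- c, 1 :: 'a::{finite,field}:])"
proof (rule poly_eqI_finite_field)
  let ?q = "card (UNIV :: 'a set)"
  have q: "?q \<ge> 2"
    by (rule card_UNIV_field_ge_2)
  have degree_prod: "degree (\<Prod>c\<in>UNIV. [:- c, 1 :: 'a:]) = ?q"
    by (subst degree_prod_eq_sum_degree) auto
  then show "degree (\<Prod>c\<in>UNIV. [:- c, 1 :: 'a:]) \<le> ?q"
    by simp
  show "degree ([:0, 1:] ^ ?q - [:0, 1 :: 'a:]) \<le> ?q"
    using q by (intro degree_diff_le) (auto simp: degree_linear_power)
  have "coeff (\<Prod>c\<in>UNIV. [:- c, 1 :: 'a:]) ?q = 1"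
    using lead_coeff_prod[of "\<lambda>c. [:- c, 1 :: 'a:]" UNIV] by (simp only: degree_prod) simp
  moreover have "coeff ([:0, 1:] ^ ?q - [:0, 1 :: 'a:]) ?q = 1"
    using q coeff_linear_power[of "0::'a" ?q] by (simp add: coeff_eq_0)
  ultimately show "coeff ([:0, 1:] ^ ?q - [:0, 1 :: 'a:]) ?q = coeff (\<Prod>c\<in>UNIV. [:- c, 1 :: 'a:]) ?q"
    by simp
  have "poly (\<Prod>c\<in>UNIV. [:- c, 1 :: 'a:]) z = 0" for z
    by (simp add: poly_prod prod_zero_iff)
  then show "poly ([:0, 1:] ^ ?q - [:0, 1:]) z = poly (\<Prod>c\<in>UNIV. [:- c, 1 :: 'a:]) z" for z
    by (simp add: power_card_UNIV_eq_self)
qed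

lemma prime_elem_dvd_mult_cancel:
  fixes p f g :: "'a::idom"
  assumes "prime_elem p" "\<not> p dvd f" "f dvd p * g"
  shows "f dvd g"
proof -
  obtain h where h: "p * g = f * h"
    using assms(3) by (elim dvdE)
  then have "p dvd f * h"
    by (simp flip: h)
  with assms(1,2) have "p dvd h"
    by (simp add: prime_elem_dvd_mult_iff)
  then obtain k where "h = p * k"
    by (elim dvdE)
  with h have "p * g = p * (f * k)"
    by (simp add: ac_simps)
  with assms(1) have "g = f * k"
    by (simp add: prime_elem_def)
  then show ?thesis
    by simp
qed

lemma prime_elem_prod_dvd_mult_cancel:
  fixes p :: "'b \<Rightarrow> 'a::idom"
  assumes "finite S" and "\<And>i. i \<in> S \<Longrightarrow> prime_elem (p i) \<and> \<not> p i dvd f"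
    and "f dvd (\<Prod>i\<in>S. p i) * g"
  shows "f dvd g"
  using assms
proof (induction S arbitrary: g rule: finite_induct)
  case (insert j S)
  have "prime_elem (p j)" "\<not> p j dvd f"
    using insert.prems(1)[of j] by simp_all
  moreover have "f dvd p j * ((\<Prod>i\<in>S. p i) * g)"
    using insert.hyps insert.prems(2) by (simp add: mult.assoc)
  ultimately have "f dvd (\<Prod>i\<in>S. p i) * g"
    by (rule prime_elem_dvd_mult_cancel)
  then show ?case
    by (rule insert.IH[rotated]) (use insert.prems(1) in blast)
qed simp

lemma dvd_X_power_card_minus_X_mult_imp_dvd:
  fixes f g :: "'a::{finite,field} poly"
  assumes "\<And>c. poly f c \<noteq> 0"
    and "f dvd ([:0, 1:] ^ card (UNIV :: 'a set) - [:0, 1:]) * g"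
  shows "f dvd g"
proof (rule prime_elem_prod_dvd_mult_cancel)
  show "f dvd (\<Prod>c\<in>UNIV. [:- c, 1:]) * g"
    using assms(2) unfolding X_power_card_minus_X .
  show "prime_elem [:- c, 1:] \<and> \<not> [:- c, 1:] dvd f" for c
    using assms(1)[of c] prime_elem_linear_field_poly[of 1 "- c"] by (simp add: poly_eq_0_iff_dvd)
qed simp

definition line_restriction_deriv ::
    "nat \<Rightarrow> 'a::comm_ring_1 mpoly \<Rightarrow> (nat \<Rightarrow> 'a) \<Rightarrow> (nat \<Rightarrow> 'a) \<Rightarrow> (nat \<Rightarrow> 'a) \<Rightarrow> 'a poly" where
  "line_restriction_deriv n F w u v = (\<Sum>i\<le>n. smult (w i) (line_restriction (mpderiv i F) u v))"

lemma euler_line_restriction: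
  assumes "in_vars n F" "homogeneous d F"
  shows "line_restriction_deriv n F u u v + [:0, 1:] * line_restriction_deriv n F v u v
           = of_nat d * line_restriction F u v"
proof -
  have "[:u i, v i:] * D = smult (u i) D + [:0, 1:] * smult (v i) D" for i and D :: "'a poly"
    by simp
  then have "line_restriction_deriv n F u u v + [:0, 1:] * line_restriction_deriv n F v u v
      = (\<Sum>i\<le>n. [:u i, v i:] * line_restriction (mpderiv i F) u v)"
    by (simp add: line_restriction_deriv_def sum.distrib sum_distrib_left)
  also have "\<dots> = of_nat d * line_restriction F u v"
    unfolding line_restriction_def by (rule const_poly.euler_identity[OF assms])
  finally show ?thesis .
qed

lemma frobenius_line_restriction:
  fixes F :: "'a::{finite,field} mpoly"
  assumes "frobenius_nonclassical n F"
  shows "line_restriction F u v dvd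
           line_restriction_deriv n F u u v + [:0, 1:] ^ card (UNIV :: 'a set) * line_restriction_deriv n F v u v"
proof -
  let ?q = "card (UNIV :: 'a set)"
  obtain H where H: "(\<Sum>i\<le>n. mvar i ^ ?q * mpderiv i F) = F * H"
    using assms unfolding frobenius_nonclassical_def by (elim dvdE)
  have "[:u i, v i:] ^ ?q * D = smult (u i) D + [:0, 1:] ^ ?q * smult (v i) D" for i and D :: "'a poly"
    by (subst linear_poly_power_card) (simp add: distrib_right)
  then have "line_restriction_deriv n F u u v + [:0, 1:] ^ ?q * line_restriction_deriv n F v u v
      = (\<Sum>i\<le>n. [:u i, v i:] ^ ?q * line_restriction (mpderiv i F) u v)"
    by (simp add: line_restriction_deriv_def sum.distrib sum_distrib_left)
  also have "\<dots> = line_restriction (\<Sum>i\<le>n. mvar i ^ ?q * mpderiv i F) u v"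
    by (simp add: line_restriction_def const_poly.eval_sum const_poly.eval_mult const_poly.eval_power)
  also have "\<dots> = line_restriction F u v * line_restriction H u v"
    by (simp add: H line_restriction_def const_poly.eval_mult)
  finally show ?thesis
    by simp
qed

lemma frobenius_nonclassical_line_restriction_dvd:
  fixes F :: "'a::{finite,field} mpoly"
  assumes "in_vars n F" "homogeneous d F" "frobenius_nonclassical n F"
  shows "line_restriction F u v dvd
           ([:0, 1:] ^ card (UNIV :: 'a set) - [:0, 1:]) * line_restriction_deriv n F v u v"
proof -
  let ?A = "line_restriction_deriv n F u u v" and ?B = "line_restriction_deriv n F v u v"
  have "([:0, 1:] ^ card (UNIV :: 'a set) - [:0, 1:]) * ?B
      = (?A + [:0, 1:] ^ card (UNIV :: 'a set) * ?B) - of_nat d * line_restriction F u v"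
    by (simp flip: euler_line_restriction[OF assms(1,2)] add: algebra_simps)
  then show ?thesis
    using frobenius_line_restriction[OF assms(3)] by simp
qed

lemma degree_line_restriction_deriv:
  assumes "homogeneous d F"
  shows "degree (line_restriction_deriv n F w u v) \<le> d - 1"
  unfolding line_restriction_deriv_def
proof (rule degree_sum_le)
  fix i
  have "degree (line_restriction (mpderiv i F) u v) \<le> d - 1"
    by (rule degree_coeff_line_restriction(1)[OF homogeneous_mpderiv[OF assms]])
  then show "degree (smult (w i) (line_restriction (mpderiv i F) u v)) \<le> d - 1"
    by (rule order.trans[OF degree_smult_le])
qed simp

lemma coeff_line_restriction_deriv:
  assumes "in_vars n F" "homogeneous d F" "d > 0"
  shows "coeff (line_restriction_deriv n F v u v) (d - 1) = of_nat d * meval F v"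
proof -
  let ?A = "line_restriction_deriv n F u u v" and ?B = "line_restriction_deriv n F v u v"
  have "coeff ?A d = 0"
    using degree_line_restriction_deriv[OF assms(2), of n u u v] assms(3)
    by (intro coeff_eq_0) linarith
  moreover have "coeff ([:0, 1:] * ?B) d = coeff ?B (d - 1)"
    using assms(3) by (cases d) simp_all
  moreover have "coeff (of_nat d * line_restriction F u v) d = of_nat d * meval F v"
    by (simp add: of_nat_mult_conv_smult degree_coeff_line_restriction(2)[OF assms(2)])
  moreover have "coeff (?A + [:0, 1:] * ?B) d = coeff (of_nat d * line_restriction F u v) d"
    by (simp only: euler_line_restriction[OF assms(1,2)])
  ultimately show ?thesis
    by simp
qed

theorem corollary2p3:
  fixes F :: "'k::{finite,field} mpoly" and n d :: nat and u v :: "nat \<Rightarrow> 'k"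
  assumes "F \<noteq> 0" and "in_vars n F" and "homogeneous d F"
    and "frobenius_nonclassical n F"
    and "\<not> CHAR('k) dvd d"
    and indep: "\<forall>a b :: 'k. (\<forall>i\<le>n. a * u i + b * v i = 0) \<longrightarrow> a = 0 \<and> b = 0"
  shows "\<exists>a b :: 'k. (a \<noteq> 0 \<or> b \<noteq> 0) \<and> meval F (\<lambda>i. a * u i + b * v i) = 0"
proof (rule ccontr)
  assume "\<not> ?thesis"
  then have no_zero: "meval F (\<lambda>i. a * u i + b * v i) \<noteq> 0" if "a \<noteq> 0 \<or> b \<noteq> 0" for a b
    using that by blast
  let ?f = "line_restriction F u v" and ?B = "line_restriction_deriv n F v u v"
  have "meval F v \<noteq> 0"
    using no_zero[of 0 1] by simp
  have no_root: "poly ?f c \<noteq> 0" for c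
    using no_zero[of 1 c] by (simp add: poly_line_restriction)
  have "of_nat d \<noteq> (0 :: 'k)"
    using assms(5) by (simp add: of_nat_eq_0_iff_char_dvd)
  then have "d > 0"
    by (cases d) simp_all
  have "coeff ?f d \<noteq> 0"
    using \<open>meval F v \<noteq> 0\<close> by (simp add: degree_coeff_line_restriction(2)[OF assms(3)])
  then have "degree ?f = d"
    using degree_coeff_line_restriction(1)[OF assms(3)] by (simp add: le_antisym le_degree)
  have "?f dvd ?B"
    using no_root frobenius_nonclassical_line_restriction_dvd[OF assms(2-4)]
    by (rule dvd_X_power_card_minus_X_mult_imp_dvd)
  moreover have "?B \<noteq> 0"
    using coeff_line_restriction_deriv[OF assms(2,3) \<open>d > 0\<close>, where u = u and v = v]
      \<open>meval F v \<noteq> 0\<close> \<open>of_nat d \<noteq> 0\<close> by auto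
  ultimately have "degree ?f \<le> degree ?B"
    by (rule dvd_imp_degree_le)
  then show False
    using degree_line_restriction_deriv[OF assms(3), of n v u v] \<open>degree ?f = d\<close> \<open>d > 0\<close> by linarith
qed

end
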